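(* Every $1$-Sperner hypergraph ${\cal H}=(V,{\cal E})$ with $V\neq\emptyset$ is $1$-decomposable, that is, it is the gluing of two $1$-Sperner hypergraphs.
   Context: A hypergraph ${\cal H}=(V,{\cal E})$ consists of a finite vertex set $V$ and a set ${\cal E}$ of subsets of $V$. It is $1$-Sperner if every two distinct hyperedges $e,f$ satisfy $\min\{|e\setminus f|,|f\setminus e|\}=1$. Given vertex-disjoint hypergraphs ${\cal H}_1=(V_1,{\cal E}_1)$, ${\cal H}_2=(V_2,{\cal E}_2)$ and a new vertex $z\notin V_1\cup V_2$, the gluing ${\cal H}_1\odot{\cal H}_2$ has vertex set $V_1\cup V_2\cup\{z\}$ and hyperedge set $\{\{z\}\cup e: e\in{\cal E}_1\}\cup\{V_1\cup e: e\in{\cal E}_2\}$. ${\cal H}$ is $z$-decomposable for a vertex $z$ if for all hyperedges $e,f$ with $z\in e\setminus f$ we have $e\setminus\{z\}\subseteq f$ (equivalently ${\cal H}$ is a gluing with new vertex $z$), and $1$-decomposable if it is $z$-decomposable for some vertex $z$. *)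

theory Defs
  imports Main
begin

definition hypergraph :: "'a set \<Rightarrow> 'a set set \<Rightarrow> bool" where
  "hypergraph V E \<longleftrightarrow> finite V \<and> E \<subseteq> Pow V"

definition one_sperner :: "'a set set \<Rightarrow> bool" where
  "one_sperner E \<longleftrightarrow>
     (\<forall>e\<in>E. \<forall>f\<in>E. e \<noteq> f \<longrightarrow> min (card (e - f)) (card (f - e)) = 1)"

definition gluing :: "'a set \<Rightarrow> 'a set set \<Rightarrow> 'a set \<Rightarrow> 'a set set \<Rightarrow> 'a \<Rightarrow> 'a set \<times> 'a set set" where
  "gluing V1 E1 V2 E2 z =
     (V1 \<union> V2 \<union> {z}, {insert z e | e. e \<in> E1} \<union> {V1 \<union> e | e. e \<in> E2})"

definition z_decomposable :: "'a set set \<Rightarrow> 'a \<Rightarrow> bool" where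
  "z_decomposable E z \<longleftrightarrow> (\<forall>e\<in>E. \<forall>f\<in>E. z \<in> e - f \<longrightarrow> e - {z} \<subseteq> f)"

definition one_decomposable :: "'a set \<Rightarrow> 'a set set \<Rightarrow> bool" where
  "one_decomposable V E \<longleftrightarrow> (\<exists>z\<in>V. z_decomposable E z)"

end

theory Submission
  imports Defs
begin

text \<open>
  Let \<open>m\<close> be a hyperedge of minimum size. Since \<open>\<H>\<close> is \<open>1\<close>-Sperner, every other hyperedge \<open>g\<close>
  misses exactly one vertex of \<open>m\<close>. Among the hyperedges \<open>f\<^sub>0 \<noteq> m\<close> choose one with \<open>|f\<^sub>0 - m|\<close>
  maximal and let \<open>z\<close> be the vertex of \<open>m\<close> it misses. If \<open>z \<in> e - f\<close>, then
  \<open>m - {z} \<subseteq> f\<close>, maximality of \<open>f\<^sub>0\<close> forces \<open>e - m \<subseteq> f\<^sub>0\<close>, and a vertex of \<open>e - {z}\<close> outside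
  \<open>f\<close> would squeeze \<open>f\<close> into \<open>f\<^sub>0\<close>, which the Sperner property forbids. So \<open>\<H>\<close> is
  \<open>z\<close>-decomposable, and splitting the hyperedges according to whether they contain \<open>z\<close>
  exhibits \<open>\<H>\<close> as a gluing of two \<open>1\<close>-Sperner hypergraphs.
\<close>

lemma one_sperner_not_subset:
  assumes "one_sperner E" "e \<in> E" "f \<in> E" "e \<noteq> f"
  shows "\<not> e \<subseteq> f"
proof
  assume "e \<subseteq> f"
  then have "card (e - f) = 0" by (metis Diff_eq_empty_iff card.empty)
  moreover have "min (card (e - f)) (card (f - e)) = 1"
    using assms unfolding one_sperner_def by blast
  ultimately show False by simp
qed

lemma one_sperner_diff_singleton_if_card_le:
  assumes "one_sperner E" "e \<in> E" "f \<in> E" "e \<noteq> f"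
    and "finite e" "finite f" "card e \<le> card f"
  shows "\<exists>y. e - f = {y}"
proof -
  have "card (e - f) \<le> card (f - e)"
    using assms(5-7) card_mono[OF \<open>finite e\<close>, of "e \<inter> f"]
    by (simp add: card_Diff_subset_Int Int_commute)
  moreover have "min (card (e - f)) (card (f - e)) = 1"
    using assms(1-4) unfolding one_sperner_def by blast
  ultimately show ?thesis by (simp add: min_absorb1 card_1_singleton_iff)
qed

lemma one_sperner_diff_singleton_if_two:
  assumes "one_sperner E" "e \<in> E" "f \<in> E" "finite e"
    and "x \<in> e - f" "y \<in> e - f" "x \<noteq> y"
  shows "\<exists>y. f - e = {y}"
proof -
  have "{x, y} \<subseteq> e - f" using assms(5,6) by blast
  then have "2 \<le> card (e - f)"
    using card_mono[of "e - f" "{x, y}"] \<open>finite e\<close> \<open>x \<noteq> y\<close> by simp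
  moreover have "e \<noteq> f" using assms(5) by blast
  then have "min (card (e - f)) (card (f - e)) = 1"
    using assms(1-3) unfolding one_sperner_def by blast
  ultimately have "card (f - e) = 1" by linarith
  then show ?thesis by (simp add: card_1_singleton_iff)
qed

lemma one_sperner_subset: "one_sperner E \<Longrightarrow> F \<subseteq> E \<Longrightarrow> one_sperner F"
  unfolding one_sperner_def by blast

lemma one_sperner_diff_common:
  assumes "one_sperner E" "\<forall>e\<in>E. A \<subseteq> e"
  shows "one_sperner ((\<lambda>e. e - A) ` E)"
  unfolding one_sperner_def
proof clarify
  fix e f assume ef: "e \<in> E" "f \<in> E" "e - A \<noteq> f - A"
  have "e - A - (f - A) = e - f" "f - A - (e - A) = f - e"
    using ef assms(2) by auto
  moreover have "e \<noteq> f" using ef by blast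
  ultimately show "min (card (e - A - (f - A))) (card (f - A - (e - A))) = 1"
    using assms(1) ef unfolding one_sperner_def by simp
qed

lemma z_decomposable_if_extremal_edges:
  assumes sp: "one_sperner E" and fin: "\<And>e. e \<in> E \<Longrightarrow> finite e"
    and m: "m \<in> E" "\<And>g. g \<in> E \<Longrightarrow> card m \<le> card g"
    and f\<^sub>0: "f\<^sub>0 \<in> E" "f\<^sub>0 \<noteq> m" "\<And>g. g \<in> E \<Longrightarrow> g \<noteq> m \<Longrightarrow> card (g - m) \<le> card (f\<^sub>0 - m)"
    and z: "z \<in> m" "z \<notin> f\<^sub>0"
  shows "z_decomposable E z"
proof -
  have diff_m: "\<exists>y. m - g = {y}" if "g \<in> E" "g \<noteq> m" for g
    using one_sperner_diff_singleton_if_card_le[OF sp m(1) that(1) that(2)[symmetric]]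
      fin m that by blast
  have m_sub: "m - {z} \<subseteq> g" if g: "g \<in> E" "z \<notin> g" for g
  proof -
    obtain y where "m - g = {y}" using diff_m g z(1) by blast
    moreover have "z \<in> m - g" using g z(1) by blast
    ultimately have "m - g = {z}" by simp
    then show ?thesis by blast
  qed
  have diff_m_sub_f\<^sub>0: "e - m \<subseteq> f\<^sub>0" if e: "e \<in> E" "e \<noteq> m" "z \<in> e" for e
  proof
    fix x assume x: "x \<in> e - m"
    show "x \<in> f\<^sub>0"
    proof (rule ccontr)
      assume "x \<notin> f\<^sub>0"
      then obtain w where "f\<^sub>0 - e = {w}"
        using one_sperner_diff_singleton_if_two[OF sp e(1) f\<^sub>0(1) fin[OF e(1)], of z x] e x z
        by blast
      moreover obtain y where y: "m - e = {y}" using diff_m e by blast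
      moreover have "y \<in> f\<^sub>0 - e" using y m_sub[OF f\<^sub>0(1) z(2)] e(3) by auto
      ultimately have "f\<^sub>0 - e \<subseteq> m" by auto
      then have "f\<^sub>0 - m \<subset> e - m" using x \<open>x \<notin> f\<^sub>0\<close> by blast
      then have "card (f\<^sub>0 - m) < card (e - m)"
        by (meson psubset_card_mono fin[OF e(1)] finite_Diff)
      with f\<^sub>0(3)[OF e(1,2)] show False by simp
    qed
  qed
  show ?thesis
    unfolding z_decomposable_def
  proof (intro ballI impI subsetI)
    fix e f x assume e: "e \<in> E" and f: "f \<in> E" and z_ef: "z \<in> e - f" and x: "x \<in> e - {z}"
    have m_f: "m - {z} \<subseteq> f" using m_sub f z_ef by blast
    show "x \<in> f"
    proof (rule ccontr)
      assume "x \<notin> f"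
      then have "x \<notin> m" using m_f x by blast
      then have "e \<noteq> m" using x by blast
      have e_m: "e - m \<subseteq> f\<^sub>0" using diff_m_sub_f\<^sub>0 e \<open>e \<noteq> m\<close> z_ef by blast
      obtain y where y: "m - e = {y}" using diff_m e \<open>e \<noteq> m\<close> by blast
      obtain w where "f - e = {w}"
        using one_sperner_diff_singleton_if_two[OF sp e f fin[OF e], of z x] z_ef x \<open>x \<notin> f\<close>
        by blast
      moreover have "y \<in> f - e" using y m_f z_ef by auto
      ultimately have "f - e \<subseteq> m - {z}" using y z_ef by auto
      moreover have "f \<inter> e \<subseteq> f\<^sub>0" using e_m m_sub[OF f\<^sub>0(1) z(2)] z_ef by blast
      ultimately have "f \<subseteq> f\<^sub>0" using m_sub[OF f\<^sub>0(1) z(2)] by blast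
      moreover have "f \<noteq> f\<^sub>0" using e_m x \<open>x \<notin> f\<close> \<open>x \<notin> m\<close> by blast
      ultimately show False using one_sperner_not_subset[OF sp f f\<^sub>0(1)] by blast
    qed
  qed
qed

lemma one_sperner_one_decomposable:
  assumes hyp: "hypergraph V E" and sp: "one_sperner E" and "V \<noteq> {}"
  shows "one_decomposable V E"
proof (cases "\<exists>m. E \<subseteq> {m}")
  case True
  moreover obtain z where "z \<in> V" using \<open>V \<noteq> {}\<close> by blast
  ultimately show ?thesis unfolding one_decomposable_def z_decomposable_def by blast
next
  case False
  have fin: "finite e" if "e \<in> E" for e
    using hyp that finite_subset unfolding hypergraph_def by blast
  obtain m where m: "m \<in> E" "\<And>g. g \<in> E \<Longrightarrow> card m \<le> card g"
    using False ex_has_least_nat[of "\<lambda>g. g \<in> E" _ card] by blast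
  obtain g where "g \<in> E - {m}" using False by blast
  moreover have "card (g - m) < Suc (card V)" if "g \<in> E - {m}" for g
  proof -
    have "g - m \<subseteq> V" using hyp that unfolding hypergraph_def by blast
    then show ?thesis using hyp card_mono[of V "g - m"] unfolding hypergraph_def by simp
  qed
  ultimately obtain f\<^sub>0 where f\<^sub>0: "f\<^sub>0 \<in> E - {m}"
    and f\<^sub>0_max: "\<And>g. g \<in> E - {m} \<Longrightarrow> card (g - m) \<le> card (f\<^sub>0 - m)"
    using ex_has_greatest_nat[of "\<lambda>g. g \<in> E - {m}" g "\<lambda>g. card (g - m)" "Suc (card V)"]
    by blast
  obtain z where z: "m - f\<^sub>0 = {z}"
    using one_sperner_diff_singleton_if_card_le[OF sp m(1), of f\<^sub>0] f\<^sub>0 fin m by blast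
  have "z_decomposable E z"
    using z_decomposable_if_extremal_edges[OF sp fin m, of f\<^sub>0 z] f\<^sub>0 f\<^sub>0_max z by auto
  moreover have "z \<in> V" using hyp m(1) z unfolding hypergraph_def by blast
  ultimately show ?thesis unfolding one_decomposable_def by blast
qed

lemma z_decomposable_gluing:
  assumes hyp: "hypergraph V E" and sp: "one_sperner E"
    and z: "z \<in> V" and dec: "z_decomposable E z"
  shows "\<exists>V\<^sub>1 E\<^sub>1 V\<^sub>2 E\<^sub>2. hypergraph V\<^sub>1 E\<^sub>1 \<and> hypergraph V\<^sub>2 E\<^sub>2 \<and> V\<^sub>1 \<inter> V\<^sub>2 = {} \<and>
    z \<notin> V\<^sub>1 \<union> V\<^sub>2 \<and> one_sperner E\<^sub>1 \<and> one_sperner E\<^sub>2 \<and> (V, E) = gluing V\<^sub>1 E\<^sub>1 V\<^sub>2 E\<^sub>2 z"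
proof -
  define E\<^sub>1 where "E\<^sub>1 = (\<lambda>e. e - {z}) ` {e \<in> E. z \<in> e}"
  define V\<^sub>1 where "V\<^sub>1 = \<Union>E\<^sub>1"
  define E\<^sub>2 where "E\<^sub>2 = (\<lambda>e. e - V\<^sub>1) ` {e \<in> E. z \<notin> e}"
  define V\<^sub>2 where "V\<^sub>2 = V - V\<^sub>1 - {z}"
  have V\<^sub>1_sub: "V\<^sub>1 \<subseteq> f" if "f \<in> E" "z \<notin> f" for f
    using dec that unfolding z_decomposable_def V\<^sub>1_def E\<^sub>1_def by blast
  have "V\<^sub>1 \<subseteq> V" "z \<notin> V\<^sub>1"
    using hyp unfolding hypergraph_def V\<^sub>1_def E\<^sub>1_def by auto
  then have hyps: "hypergraph V\<^sub>1 E\<^sub>1" "hypergraph V\<^sub>2 E\<^sub>2" and V: "V = V\<^sub>1 \<union> V\<^sub>2 \<union> {z}"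
    using hyp z finite_subset unfolding hypergraph_def V\<^sub>1_def V\<^sub>2_def E\<^sub>2_def by auto
  have "one_sperner E\<^sub>1" "one_sperner E\<^sub>2"
    unfolding E\<^sub>1_def E\<^sub>2_def
    by (rule one_sperner_diff_common; use one_sperner_subset[OF sp] V\<^sub>1_sub in auto)+
  moreover have "E = {insert z e | e. e \<in> E\<^sub>1} \<union> {V\<^sub>1 \<union> e | e. e \<in> E\<^sub>2}"
  proof (intro equalityI subsetI)
    fix e assume e: "e \<in> E"
    show "e \<in> {insert z e | e. e \<in> E\<^sub>1} \<union> {V\<^sub>1 \<union> e | e. e \<in> E\<^sub>2}"
    proof (cases "z \<in> e")
      case True
      then have "e = insert z (e - {z})" "e - {z} \<in> E\<^sub>1" using e unfolding E\<^sub>1_def by auto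
      then show ?thesis by blast
    next
      case False
      then have "e = V\<^sub>1 \<union> (e - V\<^sub>1)" "e - V\<^sub>1 \<in> E\<^sub>2" using e V\<^sub>1_sub unfolding E\<^sub>2_def by auto
      then show ?thesis by blast
    qed
  next
    fix e assume "e \<in> {insert z e | e. e \<in> E\<^sub>1} \<union> {V\<^sub>1 \<union> e | e. e \<in> E\<^sub>2}"
    then show "e \<in> E"
      using V\<^sub>1_sub unfolding E\<^sub>1_def E\<^sub>2_def by (force simp: insert_absorb Un_absorb1)
  qed
  ultimately show ?thesis
    using hyps V \<open>z \<notin> V\<^sub>1\<close> unfolding gluing_def V\<^sub>2_def by blast
qed

theorem theorem9:
  fixes V :: "'a set" and E :: "'a set set"
  assumes "hypergraph V E" and "one_sperner E" and "V \<noteq> {}"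
  shows "one_decomposable V E \<and>
         (\<exists>z V1 E1 V2 E2. hypergraph V1 E1 \<and> hypergraph V2 E2 \<and> V1 \<inter> V2 = {} \<and>
            z \<notin> V1 \<union> V2 \<and> one_sperner E1 \<and> one_sperner E2 \<and>
            (V, E) = gluing V1 E1 V2 E2 z)"
proof -
  have "one_decomposable V E" using one_sperner_one_decomposable assms by blast
  moreover from this obtain z where "z \<in> V" "z_decomposable E z"
    unfolding one_decomposable_def by blast
  ultimately show ?thesis using z_decomposable_gluing[OF assms(1,2)] by blast
qed

end
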